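(* Let $\mathcal D=U(-1,1)$ and, for $m\ge 1$, let $\mathcal D_m$ denote the distribution of the sum of $m$ i.i.d. samples from $\mathcal D$. Let $k\ge 2$ and let $Z_2,\dots,Z_k$ be independent random variables with $Z_i\sim\mathcal D_{m(i)}$ for positive integers $m(i)$, and let $X\sim\mathcal D$ be independent of them. Then $$\mathbb P\big(0\ge \max(Z_2,\dots,Z_k)\big)\le \mathbb P\big(X\ge\max(Z_2,\dots,Z_k)\big).$$ *)

theory Defs
  imports "HOL-Probability.Probability" "HOL-Probability.Convolution"
begin

definition unifD :: "real measure" where
  "unifD = uniform_measure lborel {-1<..<1}"

primrec unifDsum :: "nat \<Rightarrow> real measure" where
  "unifDsum 0 = return borel 0"
| "unifDsum (Suc n) = convolution (unifDsum n) unifD"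

end

theory Submission
  imports Defs
begin

text \<open>
  Let \<open>F\<^sub>i\<close> be the distribution function of \<open>Z\<^sub>i\<close> and \<open>G = \<Prod>i. F\<^sub>i\<close>. By independence the
  left-hand side is \<open>G 0\<close> and the right-hand side is the expectation of \<open>G X\<close>. Each \<open>D\<^sub>m\<close> is
  symmetric and has no atom at 0, so \<open>F\<^sub>i 0 = 1/2\<close>, and for \<open>t \<ge> 0\<close> the values
  \<open>a\<^sub>i = F\<^sub>i t\<close> lie in \<open>[1/2, 1]\<close> while \<open>F\<^sub>i (-t) \<ge> 1 - a\<^sub>i\<close>. Hence
  \<open>G t + G (-t) \<ge> \<Prod>a\<^sub>i + \<Prod>(1 - a\<^sub>i) \<ge> 2 (1/2)\<^sup>n = 2 G 0\<close>, and since \<open>X\<close> is symmetric,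
  the expectation of \<open>G X\<close> equals that of \<open>(G X + G (-X)) / 2\<close>, which is at least \<open>G 0\<close>.
\<close>

locale symmetric_real_distribution = real_distribution +
  assumes distr_uminus: "distr M borel uminus = M"
begin

lemma measure_uminus_vimage:
  assumes "A \<in> sets borel"
  shows "measure M (uminus -` A) = measure M A"
proof -
  have "measure M A = measure (distr M borel uminus) A"
    by (simp add: distr_uminus)
  also have "\<dots> = measure M (uminus -` A)"
    using assms by (subst measure_distr) auto
  finally show ?thesis ..
qed

lemma cdf_uminus: "cdf M (- x) = measure M {x..}"
proof -
  have "uminus -` {..- x} = {x..}" by auto
  then show ?thesis
    using measure_uminus_vimage[of "{..- x}"] by (simp add: cdf_def)
qed

lemma cdf_add_cdf_uminus_ge_1: "1 \<le> cdf M x + cdf M (- x)"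
proof -
  have "{..x} \<union> {x..} = UNIV" by auto
  then have "1 = measure M ({..x} \<union> {x..})"
    using prob_space by simp
  also have "\<dots> \<le> cdf M x + measure M {x..}"
    unfolding cdf_def by (rule measure_Un_le) auto
  finally show ?thesis by (simp add: cdf_uminus)
qed

lemma cdf_0_eq_half:
  assumes "measure M {0} = 0"
  shows "cdf M 0 = 1/2"
proof -
  have "{..0} \<union> {0<..} = (UNIV :: real set)" by auto
  then have "1 = measure M ({..0} \<union> {0<..})"
    using prob_space by simp
  also have "\<dots> = cdf M 0 + measure M {0<..}"
    unfolding cdf_def by (rule finite_measure_Union) auto
  also have "measure M {0<..} = measure M {..<0}"
    using measure_uminus_vimage[of "{..<0}"] by (simp add: vimage_def greaterThan_def)
  also have "measure M {..<0} = cdf M 0"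
  proof -
    have "{..0} = {..<0} \<union> {0 :: real}" by auto
    then show ?thesis
      using assms finite_measure_Union[of "{..<0}" "{0}"] by (simp add: cdf_def)
  qed
  finally show ?thesis by simp
qed

lemma integral_uminus:
  fixes f :: "real \<Rightarrow> 'b::{banach, second_countable_topology}"
  assumes "f \<in> borel_measurable borel"
  shows "(\<integral>x. f (- x) \<partial>M) = (\<integral>x. f x \<partial>M)"
  using integral_distr[of uminus M borel f] assms by (simp add: distr_uminus)

lemma integral_ge_of_even_part_ge:
  fixes f :: "real \<Rightarrow> real"
  assumes "integrable M f" and "\<And>x. 2 * c \<le> f x + f (- x)"
  shows "c \<le> (\<integral>x. f x \<partial>M)"
proof -
  have f: "f \<in> borel_measurable borel"
    using borel_measurable_integrable[OF assms(1)] by simp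
  have "integrable M (\<lambda>x. f (- x))"
    using assms(1) integrable_distr_eq[of uminus M borel f] by (simp add: distr_uminus)
  then have "(\<integral>x. 2 * c \<partial>M) \<le> (\<integral>x. f x + f (- x) \<partial>M)"
    using assms by (intro integral_mono) auto
  then have "2 * c \<le> (\<integral>x. f x + f (- x) \<partial>M)"
    using prob_space by simp
  also have "\<dots> = 2 * (\<integral>x. f x \<partial>M)"
    using assms(1) \<open>integrable M (\<lambda>x. f (- x))\<close> by (simp add: integral_uminus[OF f])
  finally show ?thesis by simp
qed

end

lemma distr_uminus_convolution:
  fixes N K :: "'a::ordered_euclidean_space measure"
  assumes "finite_measure N" "finite_measure K"
    and [measurable_cong]: "sets N = sets borel" "sets K = sets borel"
  shows "distr (convolution N K) borel uminus = convolution (distr N borel uminus) (distr K borel uminus)"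
proof -
  have "finite_measure (distr K borel uminus)"
    using assms(2) by (rule finite_measure.finite_measure_distr) simp
  then have "distr N borel uminus \<Otimes>\<^sub>M distr K borel uminus
      = distr (N \<Otimes>\<^sub>M K) (borel \<Otimes>\<^sub>M borel) (\<lambda>(x, y). (- x, - y))"
    by (intro pair_measure_distr) (auto intro: finite_measure.sigma_finite_measure)
  then show ?thesis
    unfolding convolution_def by (simp add: distr_distr case_prod_beta' comp_def)
qed

lemma emeasure_convolution_singleton:
  fixes N K :: "'a::ordered_euclidean_space measure"
  assumes "finite_measure N" "finite_measure K" "sets N = sets borel" "sets K = sets borel"
    and "\<And>x. emeasure K {x} = 0"
  shows "emeasure (convolution N K) {a} = 0"
proof -
  have "emeasure (convolution N K) {a} = (\<integral>\<^sup>+x. emeasure K {y. y + x \<in> {a}} \<partial>N)"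
    using assms sets_eq_imp_space_eq[OF assms(3)] sets_eq_imp_space_eq[OF assms(4)]
    by (intro convolution_emeasure) auto
  also have "\<dots> = 0"
  proof -
    have "{y. y + x \<in> {a}} = {a - x}" for x by (auto simp: algebra_simps)
    then show ?thesis using assms(5) by simp
  qed
  finally show ?thesis .
qed

lemma distr_uminus_uniform_measure_lborel:
  fixes A :: "real set"
  assumes [measurable]: "A \<in> sets borel" and "uminus -` A = A"
  shows "distr (uniform_measure lborel A) borel uminus = uniform_measure lborel A"
proof (rule measure_eqI)
  fix B :: "real set" assume "B \<in> sets (distr (uniform_measure lborel A) borel uminus)"
  then have [measurable]: "B \<in> sets borel" by simp
  have "(uminus :: real \<Rightarrow> real) \<in> borel_measurable borel" by measurable
  then have "uminus -` B \<in> sets borel"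
    using measurable_sets[of uminus borel borel B] by simp
  moreover have "A \<inter> uminus -` B = uminus -` (A \<inter> B)"
    using assms(2) by auto
  then have "emeasure lborel (A \<inter> uminus -` B) = emeasure (distr lborel borel uminus) (A \<inter> B)"
    by (subst emeasure_distr) auto
  ultimately show "emeasure (distr (uniform_measure lborel A) borel uminus) B
      = emeasure (uniform_measure lborel A) B"
    by (simp add: emeasure_distr lborel_distr_uminus)
qed simp

lemma symmetric_real_distribution_unifD: "symmetric_real_distribution unifD"
proof (intro symmetric_real_distribution.intro real_distribution.intro)
  show "prob_space unifD"
    unfolding unifD_def by (rule prob_space_uniform_measure) auto
  show "real_distribution_axioms unifD"
    by unfold_locales (simp add: unifD_def)
  show "symmetric_real_distribution_axioms unifD"
    unfolding symmetric_real_distribution_axioms_def unifD_def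
    by (rule distr_uminus_uniform_measure_lborel) auto
qed

lemma emeasure_unifD_singleton: "emeasure unifD {x} = 0"
  unfolding unifD_def by (simp add: Int_insert_right)

lemma real_distribution_unifDsum: "real_distribution (unifDsum n)"
proof (induction n)
  case 0
  show ?case
    by (simp add: real_distribution_def real_distribution_axioms_def prob_space_return)
next
  case (Suc n)
  interpret S: real_distribution "unifDsum n" by fact
  interpret U: symmetric_real_distribution unifD by (rule symmetric_real_distribution_unifD)
  interpret P: pair_prob_space "unifDsum n" unifD ..
  have "prob_space (unifDsum (Suc n))"
    unfolding unifDsum.simps convolution_def by (rule P.prob_space_distr) measurable
  then show ?case
    by (simp add: real_distribution_def real_distribution_axioms_def)
qed

lemma symmetric_real_distribution_unifDsum: "symmetric_real_distribution (unifDsum n)"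
proof (induction n)
  case 0
  show ?case
    by (intro symmetric_real_distribution.intro real_distribution_unifDsum)
      (unfold_locales, simp add: distr_return)
next
  case (Suc n)
  interpret S: symmetric_real_distribution "unifDsum n" by fact
  interpret U: symmetric_real_distribution unifD by (rule symmetric_real_distribution_unifD)
  show ?case
    by (intro symmetric_real_distribution.intro real_distribution_unifDsum, unfold_locales)
      (simp add: distr_uminus_convolution S.distr_uminus U.distr_uminus
         S.finite_measure U.finite_measure)
qed

lemma cdf_unifDsum_0:
  assumes "0 < n"
  shows "cdf (unifDsum n) 0 = 1/2"
proof -
  obtain n' where n: "n = Suc n'" using assms gr0_conv_Suc by blast
  interpret S: symmetric_real_distribution "unifDsum n'" by (rule symmetric_real_distribution_unifDsum)
  interpret U: symmetric_real_distribution unifD by (rule symmetric_real_distribution_unifD)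
  have "emeasure (unifDsum n) {0} = 0"
    unfolding n unifDsum.simps
    by (rule emeasure_convolution_singleton)
      (simp_all add: S.finite_measure U.finite_measure emeasure_unifD_singleton)
  then show ?thesis
    using symmetric_real_distribution.cdf_0_eq_half[OF symmetric_real_distribution_unifDsum]
    by (simp add: measure_def)
qed

lemma prod_add_prod_one_minus_ge:
  fixes a :: "'i \<Rightarrow> real"
  assumes "finite J" and "\<And>i. i \<in> J \<Longrightarrow> 1/2 \<le> a i \<and> a i \<le> 1"
  shows "2 * (1/2) ^ card J \<le> (\<Prod>i\<in>J. a i) + (\<Prod>i\<in>J. 1 - a i)"
  using assms
proof (induction J rule: finite_induct)
  case empty
  show ?case by simp
next
  case (insert j J)
  let ?P = "\<Prod>i\<in>J. a i" and ?Q = "\<Prod>i\<in>J. 1 - a i"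
  have "?Q \<le> ?P"
    using insert.prems by (intro prod_mono) (simp add: mult.commute)
  moreover have "1/2 \<le> a j"
    using insert.prems by simp
  ultimately have "0 \<le> (a j - 1/2) * (?P - ?Q)"
    by simp
  moreover have "a j * ?P + (1 - a j) * ?Q = (?P + ?Q) / 2 + (a j - 1/2) * (?P - ?Q)"
    by (simp add: field_simps)
  ultimately have "(?P + ?Q) / 2 \<le> a j * ?P + (1 - a j) * ?Q"
    by linarith
  moreover have "2 * (1/2) ^ card J \<le> ?P + ?Q"
    using insert by simp
  ultimately show ?case
    using insert.hyps by simp
qed

lemma prod_cdf_add_prod_cdf_uminus_ge:
  assumes "finite J"
    and "\<And>i. i \<in> J \<Longrightarrow> symmetric_real_distribution (N i)"
    and "\<And>i. i \<in> J \<Longrightarrow> cdf (N i) 0 = 1/2"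
  shows "2 * (\<Prod>i\<in>J. cdf (N i) 0) \<le> (\<Prod>i\<in>J. cdf (N i) x) + (\<Prod>i\<in>J. cdf (N i) (- x))"
proof -
  have bound: "2 * (1/2) ^ card J \<le> (\<Prod>i\<in>J. cdf (N i) t) + (\<Prod>i\<in>J. cdf (N i) (- t))"
    if "0 \<le> t" for t
  proof -
    have cdf_t: "1/2 \<le> cdf (N i) t \<and> cdf (N i) t \<le> 1" if "i \<in> J" for i
      using assms(2,3)[OF \<open>i \<in> J\<close>] \<open>0 \<le> t\<close>
      by (metis real_distribution.cdf_bounded_prob finite_borel_measure.cdf_nondecreasing
          symmetric_real_distribution.axioms(1) real_distribution.finite_borel_measure_M)
    have "(\<Prod>i\<in>J. 1 - cdf (N i) t) \<le> (\<Prod>i\<in>J. cdf (N i) (- t))"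
      using cdf_t symmetric_real_distribution.cdf_add_cdf_uminus_ge_1[OF assms(2)]
      by (intro prod_mono) (auto simp: algebra_simps)
    then show ?thesis
      using prod_add_prod_one_minus_ge[of J "\<lambda>i. cdf (N i) t"] assms(1) cdf_t by simp
  qed
  moreover have "(\<Prod>i\<in>J. cdf (N i) 0) = (1/2) ^ card J"
    using assms(3) prod.cong[of J J "\<lambda>i. cdf (N i) 0" "\<lambda>_. 1/2"] by simp
  ultimately show ?thesis
    using bound[of "- x"] by (cases "0 \<le> x") (simp_all add: add.commute)
qed

lemma (in finite_borel_measure) borel_measurable_cdf: "cdf M \<in> borel_measurable borel"
  by (rule borel_measurable_mono) (simp add: mono_def cdf_nondecreasing)

lemma integrable_prod_cdf:
  assumes "finite_measure K" "sets K = sets borel"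
    and "\<And>i. i \<in> J \<Longrightarrow> real_distribution (N i)"
  shows "integrable K (\<lambda>y. \<Prod>i\<in>J. cdf (N i) y)"
proof (rule finite_measure.integrable_const_bound[where B=1])
  show "AE y in K. norm (\<Prod>i\<in>J. cdf (N i) y) \<le> 1"
    using assms(3) real_distribution.cdf_bounded_prob finite_borel_measure.cdf_nonneg
      real_distribution.finite_borel_measure_M
    by (auto simp: abs_prod intro!: AE_I2 prod_le_1)
  show "(\<lambda>y. \<Prod>i\<in>J. cdf (N i) y) \<in> borel_measurable K"
    using assms(2,3) finite_borel_measure.borel_measurable_cdf real_distribution.finite_borel_measure_M
    by (auto simp: measurable_cong_sets[OF assms(2) refl] intro!: borel_measurable_prod)
qed fact

lemma (in prob_space) prob_indep_vars_all_le:
  fixes Y :: "'i \<Rightarrow> 'a \<Rightarrow> real"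
  assumes indep: "indep_vars (\<lambda>_. borel) Y J" and "finite J"
  shows "prob {\<omega> \<in> space M. \<forall>i\<in>J. Y i \<omega> \<le> c} = (\<Prod>i\<in>J. cdf (distr M borel (Y i)) c)"
proof (cases "J = {}")
  case True
  then show ?thesis using prob_space by simp
next
  case False
  have "{\<omega> \<in> space M. \<forall>i\<in>J. Y i \<omega> \<le> c} = (\<Inter>i\<in>J. Y i -` {..c} \<inter> space M)"
    using False by auto
  moreover have "cdf (distr M borel (Y i)) c = prob (Y i -` {..c} \<inter> space M)" if "i \<in> J" for i
    using indep that by (simp add: cdf_def measure_distr indep_vars_def)
  ultimately show ?thesis
    using indep_varsD_finite[OF indep False \<open>finite J\<close>, of "\<lambda>_. {..c}"] by simp
qed

lemma sets_PiM_all_le_component: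
  fixes M :: "'i \<Rightarrow> real measure"
  assumes "finite J" "J \<subseteq> I" "j \<in> I" and sets_M: "\<And>i. sets (M i) = sets borel"
  shows "{f \<in> space (PiM I M). \<forall>i\<in>J. f i \<le> f j} \<in> sets (PiM I M)"
proof -
  have "(\<lambda>f. f i) \<in> borel_measurable (PiM I M)" if "i \<in> I" for i
    using measurable_component_singleton[OF that, of M]
    by (simp add: measurable_cong_sets[OF refl sets_M])
  then have "Measurable.pred (PiM I M) (\<lambda>f. f i \<le> f j)" if "i \<in> J" for i
    unfolding pred_def using that assms(2,3) by (intro borel_measurable_le) auto
  then show ?thesis
    using \<open>finite J\<close> by measurable
qed

lemma emeasure_PiM_all_le_component:
  fixes M :: "'i \<Rightarrow> real measure"
  assumes "product_sigma_finite M" "finite J" "j \<notin> J" and sets_M: "\<And>i. sets (M i) = sets borel"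
  shows "emeasure (PiM (insert j J) M) {f \<in> space (PiM (insert j J) M). \<forall>i\<in>J. f i \<le> f j}
    = (\<integral>\<^sup>+y. (\<Prod>i\<in>J. emeasure (M i) {..y}) \<partial>M j)"
proof -
  interpret product_sigma_finite M by fact
  define S where "S = {f \<in> space (PiM (insert j J) M). \<forall>i\<in>J. f i \<le> f j}"
  have S_sets: "S \<in> sets (PiM (insert j J) M)"
    unfolding S_def using \<open>finite J\<close> sets_M by (intro sets_PiM_all_le_component) auto
  have "emeasure (PiM (insert j J) M) S = (\<integral>\<^sup>+y. \<integral>\<^sup>+x. indicator S (x(j := y)) \<partial>PiM J M \<partial>M j)"
    using S_sets assms(2,3) by (subst product_nn_integral_insert_rev[symmetric]) auto
  also have "\<dots> = (\<integral>\<^sup>+y. emeasure (PiM J M) (PiE J (\<lambda>_. {..y})) \<partial>M j)"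
  proof (intro nn_integral_cong)
    fix y :: real
    have "indicator S (x(j := y)) = indicator (PiE J (\<lambda>_. {..y})) x"
      if "x \<in> space (PiM J M)" for x
      using that \<open>j \<notin> J\<close> sets_eq_imp_space_eq[OF sets_M]
      by (force simp: S_def space_PiM PiE_iff extensional_def indicator_def)
    then have "(\<integral>\<^sup>+x. indicator S (x(j := y)) \<partial>PiM J M)
        = (\<integral>\<^sup>+x. indicator (PiE J (\<lambda>_. {..y})) x \<partial>PiM J M)"
      by (rule nn_integral_cong)
    also have "\<dots> = emeasure (PiM J M) (PiE J (\<lambda>_. {..y}))"
      using \<open>finite J\<close> sets_M by (intro nn_integral_indicator sets_PiM_I_finite) auto
    finally show "(\<integral>\<^sup>+x. indicator S (x(j := y)) \<partial>PiM J M) = emeasure (PiM J M) (PiE J (\<lambda>_. {..y}))" .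
  qed
  also have "\<dots> = (\<integral>\<^sup>+y. (\<Prod>i\<in>J. emeasure (M i) {..y}) \<partial>M j)"
    using \<open>finite J\<close> sets_M by (intro nn_integral_cong emeasure_PiM) auto
  finally show ?thesis
    by (simp add: S_def)
qed

lemma (in prob_space) emeasure_indep_vars_vimage:
  assumes indep: "indep_vars M' Y I" and "I \<noteq> {}" and "S \<in> sets (PiM I M')"
  shows "emeasure M ((\<lambda>\<omega>. \<lambda>i\<in>I. Y i \<omega>) -` S \<inter> space M) = emeasure (PiM I (\<lambda>i. distr M (M' i) (Y i))) S"
proof -
  have rv: "random_variable (M' i) (Y i)" if "i \<in> I" for i
    using indep that unfolding indep_vars_def by blast
  then have "distr M (PiM I M') (\<lambda>\<omega>. \<lambda>i\<in>I. Y i \<omega>) = PiM I (\<lambda>i. distr M (M' i) (Y i))"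
    using indep \<open>I \<noteq> {}\<close> by (subst indep_vars_iff_distr_eq_PiM'[symmetric]) auto
  moreover have "emeasure (distr M (PiM I M') (\<lambda>\<omega>. \<lambda>i\<in>I. Y i \<omega>)) S
      = emeasure M ((\<lambda>\<omega>. \<lambda>i\<in>I. Y i \<omega>) -` S \<inter> space M)"
    using assms(3) rv by (intro emeasure_distr measurable_restrict) auto
  ultimately show ?thesis
    by simp
qed

lemma (in prob_space) prob_indep_vars_all_le_var:
  fixes Y :: "'i \<Rightarrow> 'a \<Rightarrow> real"
  assumes indep: "indep_vars (\<lambda>_. borel) Y (insert j J)" and "finite J" "j \<notin> J"
  shows "prob {\<omega> \<in> space M. \<forall>i\<in>J. Y i \<omega> \<le> Y j \<omega>}
    = (\<integral>y. (\<Prod>i\<in>J. cdf (distr M borel (Y i)) y) \<partial>distr M borel (Y j))"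
proof -
  define I where "I = insert j J"
  \<comment> \<open>the laws are padded outside \<open>I\<close> so that they form a product of probability spaces\<close>
  define N where "N i = (if i \<in> I then distr M borel (Y i) else return borel 0)" for i
  have N: "real_distribution (N i)" for i
    using indep by (auto simp: N_def I_def indep_vars_def real_distribution_def
      real_distribution_axioms_def intro: prob_space_return prob_space_distr)
  then have N_sets: "sets (N i) = sets borel" for i
    by (simp add: real_distribution_def real_distribution_axioms_def)
  interpret product_sigma_finite N
    using N by (simp add: product_sigma_finite_def real_distribution_def prob_space_imp_sigma_finite)
  define S where "S = {f \<in> space (PiM I (\<lambda>_. borel)). \<forall>i\<in>J. f i \<le> (f j :: real)}"
  have "{\<omega> \<in> space M. \<forall>i\<in>J. Y i \<omega> \<le> Y j \<omega>} = (\<lambda>\<omega>. \<lambda>i\<in>I. Y i \<omega>) -` S \<inter> space M"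
    by (auto simp: S_def I_def space_PiM)
  moreover have "S \<in> sets (PiM I (\<lambda>_. borel))"
    unfolding S_def I_def using \<open>finite J\<close> by (intro sets_PiM_all_le_component) auto
  ultimately have "emeasure M {\<omega> \<in> space M. \<forall>i\<in>J. Y i \<omega> \<le> Y j \<omega>}
      = emeasure (PiM I (\<lambda>i. distr M borel (Y i))) S"
    using indep by (simp add: emeasure_indep_vars_vimage I_def)
  also have "PiM I (\<lambda>i. distr M borel (Y i)) = PiM I N"
    by (rule PiM_cong) (simp_all add: N_def)
  also have "S = {f \<in> space (PiM I N). \<forall>i\<in>J. f i \<le> f j}"
    using sets_eq_imp_space_eq[OF N_sets] by (simp add: S_def space_PiM)
  also have "emeasure (PiM I N) \<dots> = (\<integral>\<^sup>+y. (\<Prod>i\<in>J. emeasure (N i) {..y}) \<partial>N j)"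
    unfolding I_def
    using product_sigma_finite_axioms assms(2,3) N_sets by (rule emeasure_PiM_all_le_component)
  also have "\<dots> = (\<integral>\<^sup>+y. ennreal (\<Prod>i\<in>J. cdf (N i) y) \<partial>N j)"
    using N by (simp add: cdf_def finite_measure.emeasure_eq_measure prob_space.finite_measure
        real_distribution_def prod_ennreal)
  also have "\<dots> = ennreal (\<integral>y. (\<Prod>i\<in>J. cdf (N i) y) \<partial>N j)"
    using N N_sets
    by (intro nn_integral_eq_integral integrable_prod_cdf AE_I2 prod_nonneg)
      (auto simp: real_distribution_def prob_space.finite_measure cdf_def)
  finally have "ennreal (prob {\<omega> \<in> space M. \<forall>i\<in>J. Y i \<omega> \<le> Y j \<omega>})
      = ennreal (\<integral>y. (\<Prod>i\<in>J. cdf (N i) y) \<partial>N j)"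
    by (simp add: emeasure_eq_measure)
  moreover have "0 \<le> (\<integral>y. (\<Prod>i\<in>J. cdf (N i) y) \<partial>N j)"
    by (simp add: integral_nonneg prod_nonneg cdf_def)
  ultimately show ?thesis
    by (simp add: N_def I_def)
qed

theorem lemma26:
  fixes M :: "'a measure" and X :: "'a \<Rightarrow> real" and Z :: "nat \<Rightarrow> 'a \<Rightarrow> real"
    and m :: "nat \<Rightarrow> nat" and k :: nat
  assumes "prob_space M"
    and "k \<ge> 2"
    and "\<forall>i\<in>{2..k}. m i > 0"
    and "prob_space.indep_vars M (\<lambda>_. borel) (\<lambda>i. if i = 0 then X else Z i) (insert 0 {2..k})"
    and "distr M borel X = unifD"
    and "\<forall>i\<in>{2..k}. distr M borel (Z i) = unifDsum (m i)"
  shows "measure M {\<omega> \<in> space M. 0 \<ge> Max ((\<lambda>i. Z i \<omega>) ` {2..k})}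
         \<le> measure M {\<omega> \<in> space M. X \<omega> \<ge> Max ((\<lambda>i. Z i \<omega>) ` {2..k})}"
proof -
  interpret prob_space M by fact
  interpret U: symmetric_real_distribution unifD by (rule symmetric_real_distribution_unifD)
  define J where "J = {2..k}"
  define Y where "Y = (\<lambda>i. if i = 0 then X else Z i)"
  define G where "G y = (\<Prod>i\<in>J. cdf (unifDsum (m i)) y)" for y
  have J: "finite J" "J \<noteq> {}" "0 \<notin> J"
    using assms(2) by (auto simp: J_def)
  have Y0: "Y 0 = X"
    by (simp add: Y_def)
  have indep: "indep_vars (\<lambda>_. borel) Y (insert 0 J)"
    using assms(4) by (simp add: Y_def J_def)
  have distr_Y: "distr M borel (Y i) = unifDsum (m i)" if "i \<in> J" for i
    using assms(6) that J(3) by (auto simp: Y_def J_def)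
  have Max_le_iff: "Max ((\<lambda>i. Z i \<omega>) ` J) \<le> c \<longleftrightarrow> (\<forall>i\<in>J. Y i \<omega> \<le> c)" for \<omega> c
    using J by (auto simp: Y_def)
  have "measure M {\<omega> \<in> space M. 0 \<ge> Max ((\<lambda>i. Z i \<omega>) ` J)} = G 0"
    using prob_indep_vars_all_le[OF indep_vars_subset[OF indep subset_insertI] J(1), of 0]
    by (simp add: Max_le_iff G_def distr_Y)
  also have "G 0 \<le> (\<integral>y. G y \<partial>unifD)"
  proof (rule U.integral_ge_of_even_part_ge)
    show "integrable unifD G"
      unfolding G_def
      by (intro integrable_prod_cdf U.finite_measure U.events_eq_borel real_distribution_unifDsum)
    show "2 * G 0 \<le> G y + G (- y)" for y
      unfolding G_def using J(1) assms(3) symmetric_real_distribution_unifDsum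
      by (intro prod_cdf_add_prod_cdf_uminus_ge) (auto simp: J_def cdf_unifDsum_0)
  qed
  also have "(\<integral>y. G y \<partial>unifD) = measure M {\<omega> \<in> space M. X \<omega> \<ge> Max ((\<lambda>i. Z i \<omega>) ` J)}"
    using prob_indep_vars_all_le_var[OF indep J(1,3)] assms(5)
    by (simp add: Max_le_iff G_def distr_Y Y0)
  finally show ?thesis
    by (simp add: J_def)
qed

end
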